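(* Let $k$ be a positive integer, $a=6k+5$, $b=2a-6$, $c=2a-4$, $S=\{a,b,c\}$, $G=\langle S\rangle$. For $i\in[0,4k+2]$ let $I_{i,k}=[ia-6\lfloor i/2\rfloor,\,ia-4]_2\cup\{ia\}$, and let $H_{14,k}=\bigcup_{i=0}^{4k+2}I_{i,k}\cup[(4k+1)a+3,\infty[$. Then: (1) $x\in G$ if and only if $x=(s+2q)a-6q+2r$ for some $q,r,s\in\mathbb{N}$ with $0\le r\le q$; (2) $I_{i,k}<I_{i+2,k}$ for $i\in[0,4k]$; $I_{i,k}<I_{i+1,k}$ for $i\in[0,2k]$; and for every $i\in[2k+1,4k+1]$, $I_{i+1,k}\cap[(i-1)a+1,\,ia]=[ia-6i_k-1,\,ia-1]_2$, where $i_k=\lfloor (i-1-2k)/2\rfloor$; (3) $G=H_{14,k}$; (4) $H_{14,k}$ is a $3$-permutation numerical semigroup.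
   Context: $\mathbb{N}=\{0,1,2,\dots\}$. A numerical semigroup is a submonoid $G$ of $(\mathbb{N},+,0)$ with $\mathbb{N}\setminus G$ finite; $\langle S\rangle$ is the submonoid generated by $S$. Writing the elements of a numerical semigroup as $0=g_0<g_1<g_2<\cdots$, it is an $n$-permutation numerical semigroup if it is generated by $\{g_1,\dots,g_n\}$ and for every $k\in\mathbb{N}$ the tuple $(g_{kn+1}\bmod n,\dots,g_{kn+n}\bmod n)$ contains exactly one representative of each residue class mod $n$. Notation: $[u,v]=\{x\in\mathbb{N}:u\le x\le v\}$ and $[u,v]_2=\{x\in[u,v]:x\equiv u\pmod 2\}$ (both empty if $u>v$); $[u,\infty[=\{x\in\mathbb{N}:x\ge u\}$; for nonempty $X,Y$, $X<Y$ means $x<y$ for all $x\in X,y\in Y$. *)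

theory Defs
  imports Main "HOL-Library.Infinite_Set"
begin

inductive_set gen :: "nat set \<Rightarrow> nat set" for S :: "nat set" where
  gen_zero: "0 \<in> gen S"
| gen_elem: "s \<in> S \<Longrightarrow> s \<in> gen S"
| gen_add: "x \<in> gen S \<Longrightarrow> y \<in> gen S \<Longrightarrow> x + y \<in> gen S"

definition numerical_semigroup :: "nat set \<Rightarrow> bool" where
  "numerical_semigroup G \<longleftrightarrow> 0 \<in> G \<and> (\<forall>x\<in>G. \<forall>y\<in>G. x + y \<in> G) \<and> finite (UNIV - G)"

text \<open>g_j = enumerate G j is the j-th smallest element (g_0 = 0).\<close>
definition perm_numerical_semigroup :: "nat \<Rightarrow> nat set \<Rightarrow> bool" where
  "perm_numerical_semigroup n G \<longleftrightarrow>
     numerical_semigroup G \<and>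
     G = gen (enumerate G ` {1..n}) \<and>
     (\<forall>m. bij_betw (\<lambda>j. enumerate G (m * n + j) mod n) {1..n} {0..<n})"

definition ivl :: "int \<Rightarrow> int \<Rightarrow> nat set" where
  "ivl u v = {x. u \<le> int x \<and> int x \<le> v}"

definition ivl2 :: "int \<Rightarrow> int \<Rightarrow> nat set" where
  "ivl2 u v = {x. u \<le> int x \<and> int x \<le> v \<and> int x mod 2 = u mod 2}"

definition set_less :: "nat set \<Rightarrow> nat set \<Rightarrow> bool" where
  "set_less X Y \<longleftrightarrow> (\<forall>x\<in>X. \<forall>y\<in>Y. x < y)"

definition aa :: "nat \<Rightarrow> nat" where "aa k = 6 * k + 5"

definition Gk :: "nat \<Rightarrow> nat set" where
  "Gk k = gen {aa k, 2 * aa k - 6, 2 * aa k - 4}"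

definition Iik :: "nat \<Rightarrow> nat \<Rightarrow> nat set" where
  "Iik i k = ivl2 (int (i * aa k) - 6 * int (i div 2)) (int (i * aa k) - 4) \<union> {i * aa k}"

definition H14 :: "nat \<Rightarrow> nat set" where
  "H14 k = (\<Union>i\<in>{0..4*k+2}. Iik i k) \<union> {x. (4*k+1) * aa k + 3 \<le> x}"

end

theory Submission
  imports Defs
begin

text \<open>An element \<open>\<alpha>a + \<beta>(2a-6) + \<gamma>(2a-4)\<close> of \<open>G\<close> equals \<open>(s+2q)a - 6q + 2r\<close> with
  \<open>s = \<alpha>, q = \<beta>+\<gamma>, r = \<gamma>\<close>, that is \<open>na - 2j\<close> with \<open>n = s+2q\<close> and \<open>j = 3q-r\<close>; these \<open>j\<close> range
  exactly over \<open>{0} \<union> [2, 3\<lfloor>n/2\<rfloor>]\<close>. So \<open>G\<close> is the union of the layers \<open>I\<^sub>n\<close>, and parts (1)-(3)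
  are bounds on these layers. For (4) write \<open>x = Qa + R\<close> with \<open>0 \<le> R < a\<close>: below \<open>(4k+1)a\<close> at most two
  layers, of opposite parity, meet the open window \<open>(Qa, (Q+1)a)\<close>, and above it \<open>G\<close> misses a single
  number. This describes \<open>G\<close> in these coordinates and yields an explicit successor map on \<open>G\<close>.
  Following it from 0 one computes the index of each element modulo 3, and checks that after an
  element of index \<open>\<equiv> 1\<close> the next two gaps are congruent modulo 3 and not divisible by 3;
  hence every block \<open>g\<^sub>3\<^sub>m\<^sub>+\<^sub>1, g\<^sub>3\<^sub>m\<^sub>+\<^sub>2, g\<^sub>3\<^sub>m\<^sub>+\<^sub>3\<close> meets all three residues.\<close>

section \<open>Layers\<close>

lemma mult_mem_gen: "s \<in> S \<Longrightarrow> m * s \<in> gen S"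
  by (induction m) (auto intro: gen.intros)

lemma mem_gen_insert3_iff:
  "x \<in> gen {u, v, w} \<longleftrightarrow> (\<exists>\<alpha> \<beta> \<gamma>. x = \<alpha>*u + \<beta>*v + \<gamma>*w)"
proof
  assume "x \<in> gen {u, v, w}"
  then show "\<exists>\<alpha> \<beta> \<gamma>. x = \<alpha>*u + \<beta>*v + \<gamma>*w"
  proof (induction rule: gen.induct)
    case gen_zero
    show ?case by (intro exI[of _ 0]) simp
  next
    case (gen_elem s)
    then have "s = 1*u + 0*v + 0*w \<or> s = 0*u + 1*v + 0*w \<or> s = 0*u + 0*v + 1*w" by auto
    then show ?case by blast
  next
    case (gen_add x y)
    then obtain \<alpha> \<beta> \<gamma> \<alpha>' \<beta>' \<gamma>' where
      "x = \<alpha>*u + \<beta>*v + \<gamma>*w" "y = \<alpha>'*u + \<beta>'*v + \<gamma>'*w" by blast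
    then have "x + y = (\<alpha>+\<alpha>')*u + (\<beta>+\<beta>')*v + (\<gamma>+\<gamma>')*w" by (simp add: algebra_simps)
    then show ?case by blast
  qed
next
  assume "\<exists>\<alpha> \<beta> \<gamma>. x = \<alpha>*u + \<beta>*v + \<gamma>*w"
  then show "x \<in> gen {u, v, w}" by (auto intro!: gen_add mult_mem_gen)
qed

lemma mem_Gk_iff:
  "x \<in> Gk k \<longleftrightarrow> (\<exists>q r s :: nat. r \<le> q \<and> int x = int ((s + 2*q) * aa k) - 6*int q + 2*int r)"
proof -
  have gens: "2 * aa k - 6 = 12*k + 4" "2 * aa k - 4 = 12*k + 6" by (simp_all add: aa_def)
  have "x \<in> Gk k \<longleftrightarrow> (\<exists>\<alpha> \<beta> \<gamma>. x = \<alpha>*aa k + \<beta>*(12*k + 4) + \<gamma>*(12*k + 6))"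
    unfolding Gk_def gens by (rule mem_gen_insert3_iff)
  also have "\<dots> \<longleftrightarrow> (\<exists>q r s :: nat. r \<le> q \<and> int x = int ((s + 2*q) * aa k) - 6*int q + 2*int r)"
  proof
    assume "\<exists>\<alpha> \<beta> \<gamma>. x = \<alpha>*aa k + \<beta>*(12*k + 4) + \<gamma>*(12*k + 6)"
    then obtain \<alpha> \<beta> \<gamma> where "x = \<alpha>*aa k + \<beta>*(12*k + 4) + \<gamma>*(12*k + 6)" by blast
    then have "int x = int ((\<alpha> + 2*(\<beta>+\<gamma>)) * aa k) - 6*int (\<beta>+\<gamma>) + 2*int \<gamma>"
      by (simp add: aa_def algebra_simps)
    then show "\<exists>q r s :: nat. r \<le> q \<and> int x = int ((s + 2*q) * aa k) - 6*int q + 2*int r"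
      by (intro exI[of _ "\<beta>+\<gamma>"] exI[of _ \<gamma>] exI[of _ \<alpha>]) simp
  next
    assume "\<exists>q r s :: nat. r \<le> q \<and> int x = int ((s + 2*q) * aa k) - 6*int q + 2*int r"
    then obtain q r s where "r \<le> q" "int x = int ((s + 2*q) * aa k) - 6*int q + 2*int r" by blast
    moreover obtain d where "q = r + d" using \<open>r \<le> q\<close> le_iff_add by blast
    ultimately have "int x = int (s*aa k + d*(12*k + 4) + r*(12*k + 6))"
      by (simp add: aa_def algebra_simps)
    then show "\<exists>\<alpha> \<beta> \<gamma>. x = \<alpha>*aa k + \<beta>*(12*k + 4) + \<gamma>*(12*k + 6)"
      by (intro exI[of _ s] exI[of _ d] exI[of _ r]) (simp only: of_nat_eq_iff)
  qed
  finally show ?thesis .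
qed

lemma layer_offset_iff:
  "(\<exists>q r s :: nat. r \<le> q \<and> n = s + 2*q \<and> j = 3*q - r) \<longleftrightarrow> j = 0 \<or> 2 \<le> j \<and> j \<le> 3*(n div 2)"
proof
  assume "\<exists>q r s. r \<le> q \<and> n = s + 2*q \<and> j = 3*q - r"
  then obtain q r s where "r \<le> q" "n = s + 2*q" "j = 3*q - r" by blast
  moreover have "q \<le> n div 2" using \<open>n = s + 2*q\<close> by simp
  ultimately show "j = 0 \<or> 2 \<le> j \<and> j \<le> 3*(n div 2)" by (cases "q = 0") auto
next
  assume j: "j = 0 \<or> 2 \<le> j \<and> j \<le> 3*(n div 2)"
  define q where "q = (j + 2) div 3"
  have q: "j \<le> 3*q" "3*q \<le> j + 2" unfolding q_def by linarith+
  have "2*q \<le> j" "q \<le> n div 2" using j q by auto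
  then have "3*q - j \<le> q" "2*q \<le> n" "j = 3*q - (3*q - j)" using q by linarith+
  then show "\<exists>q r s. r \<le> q \<and> n = s + 2*q \<and> j = 3*q - r"
    by (intro exI[of _ q] exI[of _ "3*q - j"] exI[of _ "n - 2*q"]) simp
qed

lemma mem_Gk_iff_layer:
  "x \<in> Gk k \<longleftrightarrow> (\<exists>n j. x + 2*j = n * aa k \<and> (j = 0 \<or> 2 \<le> j \<and> j \<le> 3*(n div 2)))"
proof -
  have eq: "int x = int ((s + 2*q) * aa k) - 6*int q + 2*int r \<longleftrightarrow> x + 2*(3*q - r) = (s + 2*q) * aa k"
    if "r \<le> q" for q r s
  proof -
    have "x + 2*(3*q - r) = (s + 2*q) * aa k \<longleftrightarrow> int (x + 2*(3*q - r)) = int ((s + 2*q) * aa k)"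
      by (rule of_nat_eq_iff[symmetric])
    also have "int (x + 2*(3*q - r)) = int x + 6*int q - 2*int r" using that by (simp add: of_nat_diff)
    finally show ?thesis by linarith
  qed
  show ?thesis
    unfolding mem_Gk_iff layer_offset_iff[symmetric] using eq by blast
qed

lemma mem_ivl2_iff: "x \<in> ivl2 u v \<longleftrightarrow> (\<exists>t\<ge>0. int x = u + 2*t \<and> u + 2*t \<le> v)"
proof
  assume x: "x \<in> ivl2 u v"
  define t where "t = (int x - u) div 2"
  have "int x = u + 2*t" "0 \<le> t" "int x \<le> v" using x unfolding ivl2_def t_def by auto presburger+
  then show "\<exists>t\<ge>0. int x = u + 2*t \<and> u + 2*t \<le> v" by metis
qed (auto simp: ivl2_def)

lemma mem_Iik_iff:
  "x \<in> Iik i k \<longleftrightarrow> (\<exists>j. x + 2*j = i * aa k \<and> (j = 0 \<or> 2 \<le> j \<and> j \<le> 3*(i div 2)))"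
proof -
  define m where "m = i div 2"
  define P where "P = i * aa k"
  have "x \<in> ivl2 (int P - 6 * int m) (int P - 4) \<longleftrightarrow> (\<exists>j. x + 2*j = P \<and> 2 \<le> j \<and> j \<le> 3*m)"
  proof
    assume "x \<in> ivl2 (int P - 6 * int m) (int P - 4)"
    then obtain t where t: "0 \<le> t" "int x = int P - 6 * int m + 2*t" "t \<le> 3 * int m - 2"
      unfolding mem_ivl2_iff by auto
    define j where "j = nat (3 * int m - t)"
    have j: "int j = 3 * int m - t" using t by (simp add: j_def)
    have "int (x + 2*j) = int P" using t(2) j by simp
    then have "x + 2*j = P" by (simp only: of_nat_eq_iff)
    moreover have "2 \<le> j" "j \<le> 3*m" using t j by linarith+
    ultimately show "\<exists>j. x + 2*j = P \<and> 2 \<le> j \<and> j \<le> 3*m" by blast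
  next
    assume "\<exists>j. x + 2*j = P \<and> 2 \<le> j \<and> j \<le> 3*m"
    then obtain j where j: "x + 2*j = P" "2 \<le> j" "j \<le> 3*m" by blast
    then have "int x + 2*int j = int P" by (simp flip: of_nat_add of_nat_mult)
    with j show "x \<in> ivl2 (int P - 6 * int m) (int P - 4)"
      unfolding mem_ivl2_iff by (intro exI[of _ "3 * int m - int j"]) auto
  qed
  then show ?thesis unfolding Iik_def m_def P_def by auto
qed

lemma Gk_eq_UN_Iik: "Gk k = (\<Union>n. Iik n k)"
  unfolding set_eq_iff UN_iff mem_Gk_iff_layer mem_Iik_iff by blast

lemma Iik_bounds:
  assumes "x \<in> Iik i k"
  shows "i * aa k \<le> x + 6*(i div 2)" "x \<le> i * aa k"
  using assms unfolding mem_Iik_iff by auto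

lemma set_less_Iik:
  assumes "6*((i + d) div 2) < d * aa k"
  shows "set_less (Iik i k) (Iik (i + d) k)"
  unfolding set_less_def
proof (intro ballI)
  fix x y assume "x \<in> Iik i k" "y \<in> Iik (i + d) k"
  then have "x \<le> i * aa k" "(i + d) * aa k \<le> y + 6*((i + d) div 2)"
    using Iik_bounds by blast+
  moreover have "(i + d) * aa k = i * aa k + d * aa k" by (rule add_mult_distrib)
  ultimately show "x < y" using assms by linarith
qed

lemma set_less_Iik_add2: "i \<le> 4*k \<Longrightarrow> set_less (Iik i k) (Iik (i + 2) k)"
  by (rule set_less_Iik) (auto simp: aa_def)

lemma set_less_Iik_Suc: "i \<le> 2*k \<Longrightarrow> set_less (Iik i k) (Iik (i + 1) k)"
  by (rule set_less_Iik) (auto simp: aa_def)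

lemma Iik_Suc_inter_window:
  assumes i: "2*k + 1 \<le> i" "i \<le> 4*k + 1"
  shows "Iik (i + 1) k \<inter> ivl (int ((i - 1) * aa k) + 1) (int (i * aa k))
           = ivl2 (int (i * aa k) - 6 * ((int i - 1 - 2 * int k) div 2) - 1) (int (i * aa k) - 1)"
proof -
  define P where "P = int (i * aa k)"
  define A where "A = int (aa k)"
  define w where "w = (int i - 1 - 2 * int k) div 2"
  have A: "A = 6 * int k + 5" by (simp add: A_def aa_def)
  have w: "int ((i + 1) div 2) = w + int k + 1" "0 \<le> w" "w \<le> int k" using i unfolding w_def by presburger+
  have PA: "int ((i + 1) * aa k) = P + A" "int ((i - 1) * aa k) = P - A"
    using i unfolding P_def A_def by (simp_all add: algebra_simps of_nat_diff)
  have "Iik (i + 1) k \<inter> ivl (P - A + 1) P = ivl2 (P - 6 * w - 1) (P - 1)"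
  proof (intro set_eqI iffI)
    fix x assume "x \<in> Iik (i + 1) k \<inter> ivl (P - A + 1) P"
    then have x: "x \<in> Iik (i + 1) k" "P - A + 1 \<le> int x" "int x \<le> P" unfolding ivl_def by auto
    then obtain j where j: "x + 2*j = (i + 1) * aa k" "j = 0 \<or> 2 \<le> j \<and> j \<le> 3*((i + 1) div 2)"
      unfolding mem_Iik_iff by blast
    have "int x + 2 * int j = P + A" using arg_cong[OF j(1), of int] PA by simp
    moreover have "j \<le> 3*((i + 1) div 2)" using j(2) by auto
    then have "int j \<le> 3 * (w + int k + 1)" unfolding w(1)[symmetric] by linarith
    ultimately show "x \<in> ivl2 (P - 6 * w - 1) (P - 1)"
      unfolding mem_ivl2_iff using x A by (intro exI[of _ "3*w + 3*int k + 3 - int j"]) presburger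
  next
    fix x assume "x \<in> ivl2 (P - 6 * w - 1) (P - 1)"
    then obtain t where t: "0 \<le> t" "int x = P - 6*w - 1 + 2*t" "P - 6*w - 1 + 2*t \<le> P - 1"
      unfolding mem_ivl2_iff by blast
    define j where "j = nat (3*w + 3*int k + 3 - t)"
    have j: "int j = 3*w + 3*int k + 3 - t" using t w A unfolding j_def by simp
    have "int (x + 2*j) = int ((i + 1) * aa k)" using t j PA(1) A by simp
    then have "x + 2*j = (i + 1) * aa k" by (simp only: of_nat_eq_iff)
    moreover have "2 \<le> j" "j \<le> 3*((i + 1) div 2)" using t j w A by linarith+
    ultimately have "x \<in> Iik (i + 1) k" unfolding mem_Iik_iff by blast
    moreover have "P - A + 1 \<le> int x" "int x \<le> P" using t w A by linarith+
    ultimately show "x \<in> Iik (i + 1) k \<inter> ivl (P - A + 1) P" unfolding ivl_def by simp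
  qed
  then show ?thesis unfolding PA(2) P_def[symmetric] w_def[symmetric] .
qed

lemma Iik_ge_threshold:
  assumes "4*k + 3 \<le> n" "x \<in> Iik n k"
  shows "(4*k + 1) * aa k + 3 \<le> x"
proof -
  obtain e where n: "n = 4*k + 3 + e" using assms(1) le_iff_add by blast
  have "n div 2 \<le> 2*k + 1 + e" "2*(n div 2) \<le> 4*k + 3 + e" unfolding n by linarith+
  moreover have "n * aa k = (4*k + 1) * aa k + (12*k + 10) + e * aa k" unfolding n by (simp add: aa_def algebra_simps)
  moreover have "5 * e \<le> e * aa k" by (simp add: aa_def)
  ultimately show ?thesis using Iik_bounds(1)[OF assms(2)] by (cases "e = 0") linarith+
qed

section \<open>Coordinates with respect to \<open>a\<close>\<close>

text \<open>The \<open>smt\<close> calls below need the parity decompositions of the \<open>div\<close>/\<open>mod\<close> terms as explicit facts.\<close>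

lemma int_div_mod_2: "(x::int) = 2*(x div 2) + x mod 2 \<and> 0 \<le> x mod 2 \<and> x mod 2 \<le> 1"
  by simp

text \<open>With \<open>K = k\<close> and \<open>a = 6K+5\<close>, \<open>Qa + R\<close> (\<open>0 \<le> R < a\<close>) lies in \<open>G\<close> iff \<open>coord_mem K Q R\<close>. Apart
  from the multiples of \<open>a\<close>, the window \<open>[Qa, (Q+1)a)\<close> contains: for \<open>Q \<le> 2K\<close> the rest of \<open>I\<^sub>Q\<^sub>+\<^sub>1\<close>
  (odd \<open>R\<close>), plus the least element of \<open>I\<^sub>2\<^sub>K\<^sub>+\<^sub>2\<close> when \<open>Q = 2K\<close>; for \<open>2K < Q \<le> 4K\<close> the layers
  \<open>I\<^sub>Q\<^sub>+\<^sub>1\<close> (odd \<open>R\<close>) and \<open>I\<^sub>Q\<^sub>+\<^sub>2\<close> (even \<open>R\<close>); from \<open>(4K+1)a\<close> on everything except \<open>(4K+1)a + 2\<close>.\<close>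

definition coord_mem :: "int \<Rightarrow> int \<Rightarrow> int \<Rightarrow> bool" where
  "coord_mem K Q R \<longleftrightarrow> R = 0 \<or>
     (1 \<le> Q \<and> Q \<le> 2*K \<and> R mod 2 = 1 \<and> 6*K+5 \<le> R + 6*((Q+1) div 2) \<and> R + 4 \<le> 6*K+5) \<or>
     (Q = 2*K \<and> R = 6*K+4) \<or>
     (2*K+1 \<le> Q \<and> Q \<le> 4*K \<and> R mod 2 = 1 \<and> 0 < R \<and> R + 4 \<le> 6*K+5) \<or>
     (2*K+1 \<le> Q \<and> Q \<le> 4*K \<and> R mod 2 = 0 \<and> 6*K+5 \<le> R + 6*((Q - 2*K) div 2) + 1 \<and> R < 6*K+5) \<or>
     (Q = 4*K+1 \<and> 0 < R \<and> (R mod 2 = 1 \<or> 3 \<le> R)) \<or>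
     (4*K+2 \<le> Q \<and> 0 \<le> R)"

lemma mult_add_eq_imp_eq:
  fixes A Q Q' R R' :: int
  assumes "0 \<le> R" "R < A" "0 \<le> R'" "R' < A" "Q*A + R = Q'*A + R'"
  shows "Q = Q' \<and> R = R'"
proof -
  have "Q = (Q*A + R) div A" "Q' = (Q'*A + R') div A" using assms(1-4) by simp_all
  then show ?thesis using assms(5) by simp
qed

lemma mult_add_ge_imp:
  fixes A Q R M c :: int
  assumes "0 \<le> R" "R < A" "M*A + c \<le> Q*A + R" "0 \<le> c"
  shows "M \<le> Q \<and> (Q = M \<longrightarrow> c \<le> R)"
proof -
  have "M \<le> Q"
  proof (rule ccontr)
    assume "\<not> M \<le> Q"
    then have "(Q + 1)*A \<le> M*A" using assms(1,2) by (intro mult_right_mono) auto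
    then show False using assms by (simp add: algebra_simps)
  qed
  then show ?thesis using assms by auto
qed

lemma Iik_imp_coord_mem:
  assumes k: "1 \<le> k" and n: "n \<le> 4*k + 2" and x: "x \<in> Iik n k"
    and xQR: "int x = Q * (6*int k + 5) + R" and R: "0 \<le> R" "R < 6*int k + 5"
  shows "coord_mem (int k) Q R"
proof -
  define K where "K = int k"
  define A where "A = 6*K + 5"
  obtain j where j: "x + 2*j = n * aa k" "j = 0 \<or> 2 \<le> j \<and> j \<le> 3*(n div 2)"
    using x unfolding mem_Iik_iff by blast
  define N where "N = int n"
  define J where "J = int j"
  have e: "Q*A + R + 2*J = N*A"
    using arg_cong[OF j(1), of int] xQR unfolding N_def J_def A_def K_def by (simp add: aa_def)
  have "int n div 2 = int (n div 2)" by simp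
  then have J: "J = 0 \<or> 2 \<le> J \<and> J \<le> 3*(N div 2)" "N \<le> 4*K + 2" "0 \<le> N" "1 \<le> K"
    using j(2) n k unfolding J_def N_def K_def by auto
  have RA: "0 \<le> R" "R < A" using R unfolding A_def K_def .
  have "2*J \<noteq> A" unfolding A_def by presburger
  then consider "J = 0" | "2 \<le> J" "J \<le> 3*(N div 2)" "2*J < A" | "2 \<le> J" "J \<le> 3*(N div 2)" "A < 2*J"
    using J(1) by linarith
  then show ?thesis
  proof cases
    case 1
    then have "R = 0" using mult_add_eq_imp_eq[OF RA, of 0 Q N] e RA by simp
    then show ?thesis unfolding coord_mem_def by simp
  next
    case 2
    then have "Q = N - 1 \<and> R = A - 2*J"
      using mult_add_eq_imp_eq[OF RA, of "A - 2*J" Q "N - 1"] e by (simp add: algebra_simps)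
    then show ?thesis using J 2 unfolding coord_mem_def A_def K_def[symmetric]
      using int_div_mod_2[of N] int_div_mod_2[of "N - 1 + 1"] int_div_mod_2[of "N - 1 - 2*K"]
        int_div_mod_2[of "6*K + 5 - 2*J"] by smt
  next
    case 3
    have "2*J < 2*A" using 3 J unfolding A_def by presburger
    then have "Q = N - 2 \<and> R = 2*A - 2*J"
      using mult_add_eq_imp_eq[OF RA, of "2*A - 2*J" Q "N - 2"] e 3 by (simp add: algebra_simps)
    then show ?thesis using J 3 unfolding coord_mem_def A_def K_def[symmetric]
      using int_div_mod_2[of N] int_div_mod_2[of "N - 2 + 1"] int_div_mod_2[of "N - 2 - 2*K"]
        int_div_mod_2[of "12*K + 10 - 2*J"] by smt
  qed
qed

lemma Iik_of_int_layer:
  assumes "int x + 2*J = N * (6*int k + 5)" "0 \<le> J" "0 \<le> N" "J = 0 \<or> 2 \<le> J \<and> J \<le> 3*(N div 2)"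
  shows "x \<in> Iik (nat N) k"
proof -
  have "int (x + 2 * nat J) = int (nat N * aa k)" using assms(1-3) by (simp add: aa_def)
  moreover have "int (nat N div 2) = N div 2" using assms(3) by (simp add: zdiv_int)
  then have "nat J = 0 \<or> 2 \<le> nat J \<and> nat J \<le> 3*(nat N div 2)" using assms(4) by linarith
  ultimately show ?thesis unfolding mem_Iik_iff of_nat_eq_iff by blast
qed

lemma coord_mem_imp_Iik:
  assumes k: "1 \<le> k" and xQR: "int x = Q * (6*int k + 5) + R" and Q: "0 \<le> Q"
    and R: "0 \<le> R" "R < 6*int k + 5" and mem: "coord_mem (int k) Q R"
  shows "\<exists>n. x \<in> Iik n k"
proof -
  define K where "K = int k"
  have K: "1 \<le> K" and mem: "coord_mem K Q R" and R: "0 \<le> R" "R < 6*K + 5"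
    using k mem R unfolding K_def by simp_all
  have xQR: "int x = Q * (6*K + 5) + R" using xQR unfolding K_def .
  have "R mod 2 = 0 \<or> R mod 2 = 1" by presburger
  then consider "R = 0" | "R mod 2 = 1" "R \<noteq> 6*K + 3" | "R = 6*K + 3" | "0 < R" "R mod 2 = 0"
    using R by linarith
  then show ?thesis
  proof cases
    case 1
    then show ?thesis using Iik_of_int_layer[of x 0 Q k] xQR Q unfolding K_def by auto
  next
    case 2
    define J where "J = (6*K + 5 - R) div 2"
    have "2*J = 6*K + 5 - R" unfolding J_def using 2 by presburger
    moreover have "2 \<le> J \<and> J \<le> 3*((Q + 1) div 2)"
      using K Q R mem 2 calculation unfolding coord_mem_def
      using int_div_mod_2[of Q] int_div_mod_2[of "Q + 1"] int_div_mod_2[of "Q - 2*K"] int_div_mod_2[of R] by smt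
    ultimately show ?thesis
      using Iik_of_int_layer[of x J "Q + 1" k] xQR Q unfolding K_def by (auto simp: algebra_simps)
  next
    case 3
    have "4*K + 1 \<le> Q"
      using K Q mem unfolding 3 coord_mem_def
      using int_div_mod_2[of Q] int_div_mod_2[of "Q + 1"] int_div_mod_2[of "Q - 2*K"]
        int_div_mod_2[of "6*K + 3"] by smt
    then have "6*K + 6 \<le> 3*((Q + 3) div 2)" by presburger
    then show ?thesis
      using Iik_of_int_layer[of x "6*K + 6" "Q + 3" k] xQR Q 3 unfolding K_def by (auto simp: algebra_simps)
  next
    case 4
    define J where "J = (12*K + 10 - R) div 2"
    have "2*J = 12*K + 10 - R" unfolding J_def using 4 by presburger
    moreover have "2 \<le> J \<and> J \<le> 3*((Q + 2) div 2)"
      using K Q R mem 4 calculation unfolding coord_mem_def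
      using int_div_mod_2[of Q] int_div_mod_2[of "Q + 1"] int_div_mod_2[of "Q + 2"] int_div_mod_2[of "Q - 2*K"]
        int_div_mod_2[of R] by smt
    ultimately show ?thesis
      using Iik_of_int_layer[of x J "Q + 2" k] xQR Q unfolding K_def by (auto simp: algebra_simps)
  qed
qed

lemma int_aa: "int (aa k) = 6 * int k + 5"
  by (simp add: aa_def)

lemma coord_mem_top:
  assumes "4*K + 1 \<le> Q" "Q = 4*K + 1 \<longrightarrow> 3 \<le> R" "0 \<le> R"
  shows "coord_mem K Q R"
proof (cases "Q = 4*K + 1")
  case True
  then have "Q = 4*K + 1 \<and> 0 < R \<and> (R mod 2 = 1 \<or> 3 \<le> R)" using assms by simp
  then show ?thesis unfolding coord_mem_def by blast
next
  case False
  then have "4*K + 2 \<le> Q \<and> 0 \<le> R" using assms by simp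
  then show ?thesis unfolding coord_mem_def by blast
qed

lemma mem_Gk_iff_coord_mem:
  assumes k: "1 \<le> k" and xQR: "int x = Q * (6*int k + 5) + R" and Q: "0 \<le> Q"
    and R: "0 \<le> R" "R < 6*int k + 5"
  shows "x \<in> Gk k \<longleftrightarrow> coord_mem (int k) Q R"
proof
  assume "x \<in> Gk k"
  then obtain n where n: "x \<in> Iik n k" unfolding Gk_eq_UN_Iik by blast
  show "coord_mem (int k) Q R"
  proof (cases "n \<le> 4*k + 2")
    case True
    then show ?thesis using Iik_imp_coord_mem[OF k _ n xQR R] by blast
  next
    case False
    then have "(4*k + 1) * aa k + 3 \<le> x" by (intro Iik_ge_threshold[OF _ n]) simp
    then have "int ((4*k + 1) * aa k + 3) \<le> int x" by (simp only: of_nat_le_iff)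
    then have "(4*int k + 1) * (6*int k + 5) + 3 \<le> Q * (6*int k + 5) + R"
      unfolding xQR by (simp add: aa_def algebra_simps)
    then have "4*int k + 1 \<le> Q \<and> (Q = 4*int k + 1 \<longrightarrow> 3 \<le> R)"
      using mult_add_ge_imp[OF R] by simp
    then show ?thesis using coord_mem_top R(1) by blast
  qed
next
  assume "coord_mem (int k) Q R"
  then show "x \<in> Gk k" unfolding Gk_eq_UN_Iik using coord_mem_imp_Iik[OF k xQR Q R] by blast
qed

lemma ge_threshold_imp_mem_Gk:
  assumes k: "1 \<le> k" and x: "(4*k + 1) * aa k + 3 \<le> x"
  shows "x \<in> Gk k"
proof -
  define Q where "Q = int x div (6*int k + 5)"
  define R where "R = int x mod (6*int k + 5)"
  have xQR: "int x = Q * (6*int k + 5) + R" unfolding Q_def R_def by (rule div_mult_mod_eq[symmetric])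
  have Q: "0 \<le> Q" and R: "0 \<le> R" "R < 6*int k + 5"
    unfolding Q_def R_def by (simp_all add: pos_imp_zdiv_nonneg_iff)
  have "int ((4*k + 1) * aa k + 3) \<le> int x" using x by (simp only: of_nat_le_iff)
  then have "(4*int k + 1) * (6*int k + 5) + 3 \<le> Q * (6*int k + 5) + R"
    unfolding xQR by (simp add: aa_def algebra_simps)
  then have "4*int k + 1 \<le> Q \<and> (Q = 4*int k + 1 \<longrightarrow> 3 \<le> R)"
    using mult_add_ge_imp[OF R] by simp
  then have "coord_mem (int k) Q R" using coord_mem_top R(1) by blast
  then show ?thesis using mem_Gk_iff_coord_mem[OF k xQR Q R] by blast
qed

lemma Gk_eq_H14:
  assumes k: "1 \<le> k"
  shows "Gk k = H14 k"
proof (intro set_eqI iffI)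
  fix x assume "x \<in> Gk k"
  then obtain n where n: "x \<in> Iik n k" unfolding Gk_eq_UN_Iik by blast
  show "x \<in> H14 k"
  proof (cases "n \<le> 4*k + 2")
    case True
    with n show ?thesis unfolding H14_def by auto
  next
    case False
    then have "(4*k + 1) * aa k + 3 \<le> x" by (intro Iik_ge_threshold[OF _ n]) simp
    then show ?thesis unfolding H14_def by blast
  qed
next
  fix x assume "x \<in> H14 k"
  then consider i where "x \<in> Iik i k" | "(4*k + 1) * aa k + 3 \<le> x" unfolding H14_def by blast
  then show "x \<in> Gk k"
  proof cases
    case 1
    then show ?thesis unfolding Gk_eq_UN_Iik by blast
  next
    case 2
    then show ?thesis by (rule ge_threshold_imp_mem_Gk[OF k])
  qed
qed

section \<open>Successors and indices modulo 3\<close>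

text \<open>Coordinates of the successor in \<open>G\<close> of an element \<open>Qa + R\<close> of \<open>G\<close>, read off from the window
  description above.\<close>

definition succ_quot :: "int \<Rightarrow> int \<Rightarrow> int \<Rightarrow> int" where
"succ_quot K Q R =
 (if Q = 0 then 1
  else if R = 0 then Q
  else if Q \<le> 2*K then (if R + 4 < 6*K+5 then Q else if R + 4 = 6*K+5 \<and> Q = 2*K then Q else Q+1)
  else if Q \<le> 4*K then (if R < 6*K+3 - 6*((Q-2*K) div 2) then Q
                        else (if R + 1 = 6*K+5 then Q+1 else Q))
  else if R + 1 = 6*K+5 then Q+1 else Q)"

definition succ_rem :: "int \<Rightarrow> int \<Rightarrow> int \<Rightarrow> int" where
"succ_rem K Q R =
 (if Q = 0 then 0
  else if R = 0 then (if Q \<le> 2*K then 6*K+5 - 6*((Q+1) div 2) else 1)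
  else if Q \<le> 2*K then (if R + 4 < 6*K+5 then R+2 else if R + 4 = 6*K+5 \<and> Q = 2*K then 6*K+4 else 0)
  else if Q \<le> 4*K then (if R < 6*K+3 - 6*((Q-2*K) div 2) then (if R + 4 = 6*K+5 then 6*K+4 else R+2)
                        else (if R + 3 = 6*K+5 then 6*K+4 else if R + 1 = 6*K+5 then 0 else R+1))
  else if Q = 4*K+1 \<and> R = 1 then 3
  else if R + 1 = 6*K+5 then 0 else R+1)"

text \<open>The index of \<open>Qa + R \<in> G\<close> in the increasing enumeration of \<open>G\<close>, modulo 3; the values
  come from counting the elements of \<open>G\<close> below each window.\<close>

definition index_mod3 :: "int \<Rightarrow> int \<Rightarrow> int \<Rightarrow> int" where
"index_mod3 K Q R =
 (if Q = 0 then 0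
  else if R = 0 then (if Q \<le> 2*K then 1 else if Q \<le> 4*K+1 then 2 else (2*Q + K + 2) mod 3)
  else if Q \<le> 2*K then (if R + 1 = 6*K+5 then 1 else (6*K+5 - R + 2) mod 3)
  else if Q \<le> 4*K then (if R + 1 = 6*K+5 then 1 else if R \<ge> 6*K+3 - 6*((Q-2*K) div 2) then (R + 1) mod 3 else (2*R+1) mod 3)
  else if Q = 4*K+1 \<and> R = 1 then 0
  else (2*Q + K + 2 + R) mod 3)"

lemma succ_coords: "1 \<le> K \<Longrightarrow> 0 \<le> Q \<Longrightarrow> 0 \<le> R \<Longrightarrow> R < 6*K+5 \<Longrightarrow> coord_mem K Q R \<Longrightarrow> Q' = succ_quot K Q R \<Longrightarrow> R' = succ_rem K Q R \<Longrightarrow>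
  0 \<le> R' \<and> R' < 6*K+5 \<and> ((Q' = Q \<and> R < R') \<or> (Q' = Q+1 \<and> R' = 0)) \<and> coord_mem K Q' R'"
  unfolding coord_mem_def succ_quot_def succ_rem_def using int_div_mod_2[of "Q+1"] int_div_mod_2[of "Q'+1"] int_div_mod_2[of R] int_div_mod_2[of R'] int_div_mod_2[of "Q - 2*K"] int_div_mod_2[of "Q'-2*K"] by smt

lemma no_coord_mem_before_succ: "1 \<le> K \<Longrightarrow> 0 \<le> Q \<Longrightarrow> 0 \<le> R \<Longrightarrow> R < 6*K+5 \<Longrightarrow> coord_mem K Q R \<Longrightarrow> Q' = succ_quot K Q R \<Longrightarrow> R' = succ_rem K Q R \<Longrightarrow>
  R < Ry \<Longrightarrow> Ry < 6*K+5 \<Longrightarrow> (Q' = Q \<Longrightarrow> Ry < R') \<Longrightarrow> \<not> coord_mem K Q Ry"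
  unfolding coord_mem_def succ_quot_def succ_rem_def using int_div_mod_2[of "Q+1"] int_div_mod_2[of R] int_div_mod_2[of Ry] int_div_mod_2[of "Q - 2*K"] by smt

lemma coord_mem_lower: "1 \<le> K \<Longrightarrow> 1 \<le> Q \<Longrightarrow> Q \<le> 2*K \<Longrightarrow> 0 < R \<Longrightarrow> coord_mem K Q R \<Longrightarrow>
   (R mod 2 = 1 \<and> 6*K+5 \<le> R + 6*((Q+1) div 2) \<and> R + 4 \<le> 6*K+5) \<or> (Q = 2*K \<and> R = 6*K+4)"
  unfolding coord_mem_def by linarith

lemma coord_mem_middle: "2*K+1 \<le> Q \<Longrightarrow> Q \<le> 4*K \<Longrightarrow> 0 < R \<Longrightarrow> coord_mem K Q R \<Longrightarrow>
   (R mod 2 = 1 \<and> R+4 \<le> 6*K+5) \<or> (R mod 2 = 0 \<and> 6*K+5 \<le> R + 6*((Q-2*K) div 2) + 1 \<and> R < 6*K+5)"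
  unfolding coord_mem_def by linarith

lemma int_mod3_Suc: "((x::int) + 1) mod 3 = (if x mod 3 = 2 then 0 else x mod 3 + 1)"
  by presburger

lemma index_mod3_succ_multiple:
  assumes K: "1 \<le> K"
    and multiple: "1 \<le> Q" "R = 0"
  shows "index_mod3 K (succ_quot K Q R) (succ_rem K Q R) = (if index_mod3 K Q R = 2 then 0 else index_mod3 K Q R + 1)"
proof -
  consider "Q \<le> 2*K" | "2*K+1 \<le> Q" "Q \<le> 4*K" | "Q = 4*K+1" | "4*K+2 \<le> Q" by linarith
  then show ?thesis
  proof cases
    case 1
    define h where "h = (Q+1) div 2"
    have h: "1 \<le> h" "h \<le> K" using 1 multiple unfolding h_def by presburger+
    have n: "succ_quot K Q R = Q" "succ_rem K Q R = 6*K+5-6*h" using multiple 1 by (simp_all add: succ_quot_def succ_rem_def h_def)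
    have s1: "index_mod3 K Q R = 1" using multiple 1 by (simp add: index_mod3_def)
    have s2: "index_mod3 K Q (6*K+5-6*h) = (6*h+2) mod 3" using multiple 1 h by (simp add: index_mod3_def)
    have "(6*h+2) mod 3 = 2" by presburger
    then show ?thesis using n s1 s2 by simp
  next
    case 2
    have w: "(Q-2*K) div 2 \<le> K" using 2 by presburger
    have n: "succ_quot K Q R = Q" "succ_rem K Q R = 1" using multiple 2 K by (simp_all add: succ_quot_def succ_rem_def)
    have s1: "index_mod3 K Q R = 2" using multiple 2 by (simp add: index_mod3_def)
    have s2: "index_mod3 K Q 1 = 0" using multiple 2 K w by (simp add: index_mod3_def)
    show ?thesis using n s1 s2 by simp
  next
    case 3
    have n: "succ_quot K Q R = Q" "succ_rem K Q R = 1" using multiple 3 K by (simp_all add: succ_quot_def succ_rem_def)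
    have s1: "index_mod3 K Q R = 2" using multiple 3 by (simp add: index_mod3_def)
    have s2: "index_mod3 K Q 1 = 0" using multiple 3 K by (simp add: index_mod3_def)
    show ?thesis using n s1 s2 by simp
  next
    case 4
    have n: "succ_quot K Q R = Q" "succ_rem K Q R = 1" using multiple 4 K by (simp_all add: succ_quot_def succ_rem_def)
    have s1: "index_mod3 K Q R = (2*Q+K+2) mod 3" using multiple 4 by (simp add: index_mod3_def)
    have s2: "index_mod3 K Q 1 = (2*Q+K+2+1) mod 3" using multiple 4 K by (simp add: index_mod3_def)
    have "(2*Q+K+2+1) mod 3 = (if (2*Q+K+2) mod 3 = 2 then 0 else (2*Q+K+2) mod 3 + 1)" by presburger
    then show ?thesis using n s1 s2 by simp
  qed
qed

lemma index_mod3_succ_lower: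
  assumes K: "1 \<le> K"
    and M: "coord_mem K Q R"
    and lower: "1 \<le> Q" "Q \<le> 2*K" "0 < R"
  shows "index_mod3 K (succ_quot K Q R) (succ_rem K Q R) = (if index_mod3 K Q R = 2 then 0 else index_mod3 K Q R + 1)"
proof -
  have mb: "(R mod 2 = 1 \<and> 6*K+5 \<le> R + 6*((Q+1) div 2) \<and> R + 4 \<le> 6*K+5) \<or> (Q = 2*K \<and> R = 6*K+4)"
    using coord_mem_lower[OF K lower M] .
  consider "R + 4 < 6*K+5" | "R + 4 = 6*K+5" "Q = 2*K" | "R + 4 = 6*K+5" "Q \<noteq> 2*K" | "Q = 2*K" "R = 6*K+4"
    using mb by linarith
  then show ?thesis
  proof cases
    case 1
    have ro: "R mod 2 = 1" using mb 1 by linarith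
    have n: "succ_quot K Q R = Q" "succ_rem K Q R = R+2" using lower 1 by (simp_all add: succ_quot_def succ_rem_def)
    have s1: "index_mod3 K Q R = (6*K+5-R+2) mod 3" using lower 1 by (simp add: index_mod3_def)
    have ne: "R + 2 + 1 \<noteq> 6*K+5" using ro by presburger
    have s2: "index_mod3 K Q (R+2) = (6*K+5-(R+2)+2) mod 3" using lower ne by (simp add: index_mod3_def)
    have "(6*K+5-(R+2)+2) mod 3 = (if (6*K+5-R+2) mod 3 = 2 then 0 else (6*K+5-R+2) mod 3 + 1)" by presburger
    then show ?thesis using n s1 s2 by simp
  next
    case 2
    have n: "succ_quot K Q R = Q" "succ_rem K Q R = 6*K+4" using lower 2 by (simp_all add: succ_quot_def succ_rem_def)
    have s1: "index_mod3 K Q R = 0" using lower 2 by (simp add: index_mod3_def)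
    have s2: "index_mod3 K Q (6*K+4) = 1" using lower 2 K by (simp add: index_mod3_def)
    show ?thesis using n s1 s2 by simp
  next
    case 3
    have n: "succ_quot K Q R = Q+1" "succ_rem K Q R = 0" using lower 3 by (simp_all add: succ_quot_def succ_rem_def)
    have s1: "index_mod3 K Q R = 0" using lower 3 by (simp add: index_mod3_def)
    have s2: "index_mod3 K (Q+1) 0 = 1" using lower 3 K by (simp add: index_mod3_def)
    show ?thesis using n s1 s2 by simp
  next
    case 4
    have n: "succ_quot K Q R = Q+1" "succ_rem K Q R = 0" using lower 4 by (simp_all add: succ_quot_def succ_rem_def)
    have s1: "index_mod3 K Q R = 1" using lower 4 by (simp add: index_mod3_def)
    have s2: "index_mod3 K (Q+1) 0 = 2" using lower 4 K by (simp add: index_mod3_def)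
    show ?thesis using n s1 s2 by simp
  qed
qed

lemma index_mod3_succ_middle:
  assumes K: "1 \<le> K"
    and R: "0 \<le> R" "R < 6*K+5"
    and M: "coord_mem K Q R"
    and middle: "2*K+1 \<le> Q" "Q \<le> 4*K" "0 < R"
  shows "index_mod3 K (succ_quot K Q R) (succ_rem K Q R) = (if index_mod3 K Q R = 2 then 0 else index_mod3 K Q R + 1)"
proof -
  define w where "w = (Q-2*K) div 2"
  have w: "0 \<le> w" "w \<le> K" using middle unfolding w_def by presburger+
  have mc: "(R mod 2 = 1 \<and> R+4 \<le> 6*K+5) \<or> (R mod 2 = 0 \<and> 6*K+5 \<le> R + 6*w + 1)"
    using coord_mem_middle[OF middle M] unfolding w_def by blast
  have sC: "\<And>R'. 0 < R' \<Longrightarrow> index_mod3 K Q R' = (if R'+1 = 6*K+5 then 1 else if R' \<ge> 6*K+3 - 6*w then (R'+1) mod 3 else (2*R'+1) mod 3)"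
    using middle unfolding w_def by (simp add: index_mod3_def)
  have nC: "succ_quot K Q R = (if R < 6*K+3 - 6*w then Q else if R + 1 = 6*K+5 then Q+1 else Q)"
     "succ_rem K Q R = (if R < 6*K+3 - 6*w then (if R + 4 = 6*K+5 then 6*K+4 else R+2)
                      else (if R + 3 = 6*K+5 then 6*K+4 else if R + 1 = 6*K+5 then 0 else R+1))"
    using middle unfolding w_def by (simp_all add: succ_quot_def succ_rem_def)
  consider (c1) "R < 6*K+3 - 6*w" "R + 4 = 6*K+5" | (c2) "R < 6*K+3 - 6*w" "R + 4 \<noteq> 6*K+5"
    | (c3) "R \<ge> 6*K+3 - 6*w" "R + 3 = 6*K+5" | (c4) "R \<ge> 6*K+3 - 6*w" "R + 1 = 6*K+5"
    | (c5) "R \<ge> 6*K+3 - 6*w" "R + 3 \<noteq> 6*K+5" "R + 1 \<noteq> 6*K+5" by linarith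
  then show ?thesis
  proof cases
    case c1
    have "index_mod3 K Q R = 0" using sC[of R] c1 middle w by (simp; presburger)
    moreover have "index_mod3 K Q (6*K+4) = 1" using sC[of "6*K+4"] K by simp
    ultimately show ?thesis using nC c1 by simp
  next
    case c2
    have ro: "R mod 2 = 1" using mc c2 by linarith
    have s1: "index_mod3 K Q R = (2*R+1) mod 3" using sC[of R] c2 middle w by simp
    have le: "R + 2 \<le> 6*K+3 - 6*w" using ro c2 by presburger
    have ne: "R + 2 + 1 \<noteq> 6*K+5" using ro by presburger
    show ?thesis
    proof (cases "R + 2 < 6*K+3 - 6*w")
      case True
      have "index_mod3 K Q (R+2) = (2*(R+2)+1) mod 3" using sC[of "R+2"] True ne middle by simp
      moreover have "(2*(R+2)+1) mod 3 = (if (2*R+1) mod 3 = 2 then 0 else (2*R+1) mod 3 + 1)" by presburger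
      ultimately show ?thesis using nC c2 s1 by simp
    next
      case False
      then have eq: "R + 2 = 6*K+3 - 6*w" using le by linarith
      have ge: "R+2 \<ge> 6*K+3 - 6*w" using eq by linarith
      have "index_mod3 K Q (R+2) = (R+2+1) mod 3" using sC[of "R+2"] ge ne middle by simp
      moreover have "(R+2+1) mod 3 = (if (2*R+1) mod 3 = 2 then 0 else (2*R+1) mod 3 + 1)" using eq by presburger
      ultimately show ?thesis using nC c2 s1 by simp
    qed
  next
    case c3
    have "index_mod3 K Q R = 0" using sC[of R] c3 middle w by (simp; presburger)
    moreover have "index_mod3 K Q (6*K+4) = 1" using sC[of "6*K+4"] K by simp
    ultimately show ?thesis using nC c3 by simp
  next
    case c4
    have "index_mod3 K Q R = 1" using sC[of R] c4 middle by simp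
    moreover have "index_mod3 K (Q+1) 0 = 2" using middle by (simp add: index_mod3_def)
    moreover have "\<not> R < 6*K+3 - 6*w" using c4 by linarith
    ultimately show ?thesis using nC c4 by simp
  next
    case c5
    have nr: "R + 2 \<noteq> 6*K+5" using mc c5 by presburger
    have "index_mod3 K Q R = (R+1) mod 3" using sC[of R] c5 middle by simp
    moreover have "index_mod3 K Q (R+1) = (R+1+1) mod 3" using sC[of "R+1"] c5 middle nr by simp
    moreover have "(R+1+1) mod 3 = (if (R+1) mod 3 = 2 then 0 else (R+1) mod 3 + 1)" by presburger
    moreover have "\<not> R < 6*K+3 - 6*w" using c5 by linarith
    ultimately show ?thesis using nC c5 by simp
  qed
qed

lemma index_mod3_succ_upper:
  assumes K: "1 \<le> K" and upper: "4*K+1 \<le> Q" "0 < R"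
  shows "index_mod3 K (succ_quot K Q R) (succ_rem K Q R) = (if index_mod3 K Q R = 2 then 0 else index_mod3 K Q R + 1)"
proof -
  have sD: "\<And>Q' R'. 4*K+1 \<le> Q' \<Longrightarrow> 0 < R' \<Longrightarrow> index_mod3 K Q' R' = (if Q' = 4*K+1 \<and> R' = 1 then 0 else (2*Q'+K+2+R') mod 3)"
    using K by (simp add: index_mod3_def)
  consider (d1) "Q = 4*K+1" "R = 1" | (d2) "R = 6*K+4" | (d3) "\<not> (Q = 4*K+1 \<and> R = 1)" "R + 1 \<noteq> 6*K+5"
    using K by linarith
  then show ?thesis
  proof cases
    case d1
    have n: "succ_quot K Q R = Q" "succ_rem K Q R = 3" using upper d1 K by (simp_all add: succ_quot_def succ_rem_def)
    have s1: "index_mod3 K Q R = 0" using sD[of Q R] d1 by simp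
    have "(9*K + 7) mod 3 = 1" by presburger
    then have s2: "index_mod3 K Q 3 = 1" using sD[of Q 3] d1 by (simp add: algebra_simps)
    show ?thesis by (simp only: n s1 s2) simp
  next
    case d2
    have n: "succ_quot K Q R = Q+1" "succ_rem K Q R = 0" using upper d2 K by (simp_all add: succ_quot_def succ_rem_def)
    have s1: "index_mod3 K Q R = (2*Q+K+2+R) mod 3" using sD[of Q R] d2 upper K by simp
    have s2: "index_mod3 K (Q+1) 0 = (2*(Q+1)+K+2) mod 3" using upper K by (simp add: index_mod3_def)
    have "2*(Q+1)+K+2 = (2*Q+K+2+R + 1) + 3*(-2*K - 1)" using d2 by simp
    then have e: "(2*(Q+1)+K+2) mod 3 = ((2*Q+K+2+R) + 1) mod 3" by (simp only: mod_mult_self2)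
    show ?thesis by (simp only: n s1 s2 e int_mod3_Suc)
  next
    case d3
    have n: "succ_quot K Q R = Q" "succ_rem K Q R = R+1" using upper d3 K by (simp_all add: succ_quot_def succ_rem_def)
    have s1: "index_mod3 K Q R = (2*Q+K+2+R) mod 3" using sD[of Q R] d3 upper by simp
    have s2: "index_mod3 K Q (R+1) = ((2*Q+K+2+R) + 1) mod 3" using sD[of Q "R+1"] d3 upper by (simp add: add.assoc)
    show ?thesis by (simp only: n s1 s2 int_mod3_Suc)
  qed
qed

lemma index_mod3_succ:
  assumes K: "1 \<le> K" and Q: "0 \<le> Q" and R: "0 \<le> R" "R < 6*K+5" and M: "coord_mem K Q R"
  shows "index_mod3 K (succ_quot K Q R) (succ_rem K Q R) = (if index_mod3 K Q R = 2 then 0 else index_mod3 K Q R + 1)"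
proof -
  consider "Q = 0" | "1 \<le> Q" "R = 0" | "1 \<le> Q" "Q \<le> 2*K" "0 < R"
    | "2*K+1 \<le> Q" "Q \<le> 4*K" "0 < R" | "4*K+1 \<le> Q" "0 < R" using Q R by linarith
  then show ?thesis
  proof cases
    case 1
    then have "R = 0" using M K unfolding coord_mem_def by linarith
    then show ?thesis using 1 K by (simp add: succ_quot_def succ_rem_def index_mod3_def)
  next
    case 2
    show ?thesis using index_mod3_succ_multiple[OF K 2] .
  next
    case 3
    show ?thesis using index_mod3_succ_lower[OF K M 3] .
  next
    case 4
    show ?thesis using index_mod3_succ_middle[OF K R M 4] .
  next
    case 5
    show ?thesis using index_mod3_succ_upper[OF K 5] .
  qed
qed

definition succ_gap :: "int \<Rightarrow> int \<Rightarrow> int \<Rightarrow> int" where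
"succ_gap K Q R = (if succ_quot K Q R = Q then succ_rem K Q R - R else 6*K+5 - R)"

lemma succ_gaps_at_index_1_multiple:
  assumes K: "1 \<le> K"
    and S: "index_mod3 K Q R = 1"
    and multiple: "1 \<le> Q" "R = 0"
  shows "(succ_gap K Q R = 1 \<and> succ_gap K (succ_quot K Q R) (succ_rem K Q R) = 1) \<or> (succ_gap K Q R = 2 \<and> succ_gap K (succ_quot K Q R) (succ_rem K Q R) = 2)
     \<or> (succ_gap K Q R mod 3 = 2 \<and> succ_gap K (succ_quot K Q R) (succ_rem K Q R) = 2)"
proof -
  consider "Q \<le> 2*K" | "2*K+1 \<le> Q" "Q \<le> 4*K+1" | "4*K+2 \<le> Q" by linarith
  then show ?thesis
  proof cases
    case 1
    define h where "h = (Q+1) div 2"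
    have h: "1 \<le> h" "h \<le> K" using 1 multiple unfolding h_def by presburger+
    have n: "succ_quot K Q R = Q" "succ_rem K Q R = 6*K+5-6*h" using multiple 1 by (simp_all add: succ_quot_def succ_rem_def h_def)
    have d1: "succ_gap K Q R = 6*K+5-6*h" using n multiple by (simp add: succ_gap_def)
    have n2: "succ_quot K Q (6*K+5-6*h) = Q" "succ_rem K Q (6*K+5-6*h) = 6*K+5-6*h+2" using multiple 1 h by (simp_all add: succ_quot_def succ_rem_def)
    have d2: "succ_gap K Q (6*K+5-6*h) = 2" using n2 by (simp add: succ_gap_def)
    have "(6*K+5-6*h) mod 3 = 2" by presburger
    then show ?thesis using n d1 d2 by simp
  next
    case 2
    then show ?thesis using S multiple by (simp add: index_mod3_def)
  next
    case 3
    have n: "succ_quot K Q R = Q" "succ_rem K Q R = 1" using multiple 3 K by (simp_all add: succ_quot_def succ_rem_def)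
    have d1: "succ_gap K Q R = 1" using n multiple by (simp add: succ_gap_def)
    have n2: "succ_quot K Q 1 = Q" "succ_rem K Q 1 = 2" using multiple 3 K by (simp_all add: succ_quot_def succ_rem_def)
    have d2: "succ_gap K Q 1 = 1" using n2 by (simp add: succ_gap_def)
    show ?thesis using n d1 d2 by simp
  qed
qed

lemma succ_gaps_at_index_1_lower:
  assumes K: "1 \<le> K"
    and M: "coord_mem K Q R"
    and S: "index_mod3 K Q R = 1"
    and lower: "1 \<le> Q" "Q \<le> 2*K" "0 < R"
  shows "(succ_gap K Q R = 1 \<and> succ_gap K (succ_quot K Q R) (succ_rem K Q R) = 1) \<or> (succ_gap K Q R = 2 \<and> succ_gap K (succ_quot K Q R) (succ_rem K Q R) = 2)
     \<or> (succ_gap K Q R mod 3 = 2 \<and> succ_gap K (succ_quot K Q R) (succ_rem K Q R) = 2)"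
proof -
  have mb: "(R mod 2 = 1 \<and> 6*K+5 \<le> R + 6*((Q+1) div 2) \<and> R + 4 \<le> 6*K+5) \<or> (Q = 2*K \<and> R = 6*K+4)"
    using coord_mem_lower[OF K lower M] .
  consider "R + 4 < 6*K+5" | "R + 4 = 6*K+5" | "Q = 2*K" "R = 6*K+4"
    using mb by linarith
  then show ?thesis
  proof cases
    case 1
    have ro: "R mod 2 = 1" using mb 1 by linarith
    have s1: "index_mod3 K Q R = (6*K+5-R+2) mod 3" using lower 1 by (simp add: index_mod3_def)
    have r6: "R + 6 < 6*K+5" using ro 1 S s1 by presburger
    have n: "succ_quot K Q R = Q" "succ_rem K Q R = R+2" using lower 1 by (simp_all add: succ_quot_def succ_rem_def)
    have d1: "succ_gap K Q R = 2" using n by (simp add: succ_gap_def)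
    have n2: "succ_quot K Q (R+2) = Q" "succ_rem K Q (R+2) = R+4" using lower r6 by (simp_all add: succ_quot_def succ_rem_def)
    have d2: "succ_gap K Q (R+2) = 2" using n2 by (simp add: succ_gap_def)
    show ?thesis using n d1 d2 by simp
  next
    case 2
    have "index_mod3 K Q R = 0" using lower 2 by (simp add: index_mod3_def)
    then show ?thesis using S by simp
  next
    case 3
    have n: "succ_quot K Q R = Q+1" "succ_rem K Q R = 0" using lower 3 by (simp_all add: succ_quot_def succ_rem_def)
    have d1: "succ_gap K Q R = 1" using n 3 by (simp add: succ_gap_def)
    have n2: "succ_quot K (Q+1) 0 = Q+1" "succ_rem K (Q+1) 0 = 1" using lower 3 K by (simp_all add: succ_quot_def succ_rem_def)
    have d2: "succ_gap K (Q+1) 0 = 1" using n2 by (simp add: succ_gap_def)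
    show ?thesis using n d1 d2 by simp
  qed
qed

lemma succ_gaps_at_index_1_middle:
  assumes K: "1 \<le> K"
    and R: "0 \<le> R" "R < 6*K+5"
    and M: "coord_mem K Q R"
    and S: "index_mod3 K Q R = 1"
    and middle: "2*K+1 \<le> Q" "Q \<le> 4*K" "0 < R"
  shows "(succ_gap K Q R = 1 \<and> succ_gap K (succ_quot K Q R) (succ_rem K Q R) = 1) \<or> (succ_gap K Q R = 2 \<and> succ_gap K (succ_quot K Q R) (succ_rem K Q R) = 2)
     \<or> (succ_gap K Q R mod 3 = 2 \<and> succ_gap K (succ_quot K Q R) (succ_rem K Q R) = 2)"
proof -
  define w where "w = (Q-2*K) div 2"
  have w: "0 \<le> w" "w \<le> K" using middle unfolding w_def by presburger+
  have mc: "(R mod 2 = 1 \<and> R+4 \<le> 6*K+5) \<or> (R mod 2 = 0 \<and> 6*K+5 \<le> R + 6*w + 1)"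
    using coord_mem_middle[OF middle M] unfolding w_def by blast
  have sC: "\<And>R'. 0 < R' \<Longrightarrow> index_mod3 K Q R' = (if R'+1 = 6*K+5 then 1 else if R' \<ge> 6*K+3 - 6*w then (R'+1) mod 3 else (2*R'+1) mod 3)"
    using middle unfolding w_def by (simp add: index_mod3_def)
  have nC: "\<And>R'. 0 < R' \<Longrightarrow> succ_quot K Q R' = (if R' < 6*K+3 - 6*w then Q else if R' + 1 = 6*K+5 then Q+1 else Q)"
     "\<And>R'. 0 < R' \<Longrightarrow> succ_rem K Q R' = (if R' < 6*K+3 - 6*w then (if R' + 4 = 6*K+5 then 6*K+4 else R'+2)
                      else (if R' + 3 = 6*K+5 then 6*K+4 else if R' + 1 = 6*K+5 then 0 else R'+1))"
    using middle unfolding w_def by (simp_all add: succ_quot_def succ_rem_def)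
  consider (c1) "R < 6*K+3 - 6*w" "R + 4 = 6*K+5" | (c2) "R < 6*K+3 - 6*w" "R + 4 \<noteq> 6*K+5"
    | (c3) "R \<ge> 6*K+3 - 6*w" "R + 3 = 6*K+5" | (c4) "R \<ge> 6*K+3 - 6*w" "R + 1 = 6*K+5"
    | (c5) "R \<ge> 6*K+3 - 6*w" "R + 3 \<noteq> 6*K+5" "R + 1 \<noteq> 6*K+5" by linarith
  then show ?thesis
  proof cases
    case c1
    have "index_mod3 K Q R = 0" using sC[of R] c1 middle w by (simp; presburger)
    then show ?thesis using S by simp
  next
    case c2
    have ro: "R mod 2 = 1" using mc c2 by linarith
    have s1: "(2*R+1) mod 3 = 1" using sC[of R] c2 middle w S by simp
    have lt: "R + 2 < 6*K+3 - 6*w" using ro c2 s1 by presburger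
    have r6: "R + 2 + 4 \<noteq> 6*K+5" using s1 by presburger
    have n: "succ_quot K Q R = Q" "succ_rem K Q R = R+2" using nC[of R] c2 middle by simp_all
    have d1: "succ_gap K Q R = 2" using n by (simp add: succ_gap_def)
    have n2: "succ_quot K Q (R+2) = Q" "succ_rem K Q (R+2) = R+4" using nC[of "R+2"] lt r6 middle by simp_all
    have d2: "succ_gap K Q (R+2) = 2" using n2 by (simp add: succ_gap_def)
    show ?thesis using n d1 d2 by simp
  next
    case c3
    have "index_mod3 K Q R = 0" using sC[of R] c3 middle w by (simp; presburger)
    then show ?thesis using S by simp
  next
    case c4
    have n: "succ_quot K Q R = Q+1" "succ_rem K Q R = 0" using nC[of R] c4 middle by simp_all
    have d1: "succ_gap K Q R = 1" using n c4 by (simp add: succ_gap_def)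
    have n2: "succ_quot K (Q+1) 0 = Q+1" "succ_rem K (Q+1) 0 = 1" using middle K by (simp_all add: succ_quot_def succ_rem_def)
    have d2: "succ_gap K (Q+1) 0 = 1" using n2 by (simp add: succ_gap_def)
    show ?thesis using n d1 d2 by simp
  next
    case c5
    have nr: "R + 2 \<noteq> 6*K+5" using mc c5 by presburger
    have s1: "(R+1) mod 3 = 1" using sC[of R] c5 middle S by simp
    have r4: "R + 1 + 3 \<noteq> 6*K+5" using s1 by presburger
    have n: "succ_quot K Q R = Q" "succ_rem K Q R = R+1" using nC[of R] c5 middle by simp_all
    have d1: "succ_gap K Q R = 1" using n by (simp add: succ_gap_def)
    have n2: "succ_quot K Q (R+1) = Q" "succ_rem K Q (R+1) = R+2" using nC[of "R+1"] c5 middle nr r4 by simp_all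
    have d2: "succ_gap K Q (R+1) = 1" using n2 by (simp add: succ_gap_def)
    show ?thesis using n d1 d2 by simp
  qed
qed

lemma succ_gaps_at_index_1_upper:
  assumes K: "1 \<le> K"
    and S: "index_mod3 K Q R = 1"
    and upper: "4*K+1 \<le> Q" "0 < R"
  shows "(succ_gap K Q R = 1 \<and> succ_gap K (succ_quot K Q R) (succ_rem K Q R) = 1) \<or> (succ_gap K Q R = 2 \<and> succ_gap K (succ_quot K Q R) (succ_rem K Q R) = 2)
     \<or> (succ_gap K Q R mod 3 = 2 \<and> succ_gap K (succ_quot K Q R) (succ_rem K Q R) = 2)"
proof -
  consider (d1) "Q = 4*K+1" "R = 1" | (d2) "R + 1 = 6*K+5" | (d3) "\<not> (Q = 4*K+1 \<and> R = 1)" "R + 1 \<noteq> 6*K+5" using K by linarith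
  then show ?thesis
  proof cases
    case d1
    have "index_mod3 K Q R = 0" using d1 K by (simp add: index_mod3_def)
    then show ?thesis using S by simp
  next
    case d2
    have n: "succ_quot K Q R = Q+1" "succ_rem K Q R = 0" using upper d2 K by (auto simp add: succ_quot_def succ_rem_def)
    have d1: "succ_gap K Q R = 1" using n d2 by (simp add: succ_gap_def)
    have n2: "succ_quot K (Q+1) 0 = Q+1" "succ_rem K (Q+1) 0 = 1" using upper K by (simp_all add: succ_quot_def succ_rem_def)
    have d2': "succ_gap K (Q+1) 0 = 1" using n2 by (simp add: succ_gap_def)
    show ?thesis using n d1 d2' by simp
  next
    case d3
    have n: "succ_quot K Q R = Q" "succ_rem K Q R = R+1" using upper d3 K by (auto simp add: succ_quot_def succ_rem_def)
    have d1: "succ_gap K Q R = 1" using n by (simp add: succ_gap_def)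
    have d2': "succ_gap K Q (R+1) = 1"
    proof (cases "R + 2 = 6*K+5")
      case True
      then have "succ_quot K Q (R+1) = Q+1" "succ_rem K Q (R+1) = 0" using upper K by (auto simp add: succ_quot_def succ_rem_def)
      then show ?thesis using True by (simp add: succ_gap_def)
    next
      case False
      then have "succ_quot K Q (R+1) = Q" "succ_rem K Q (R+1) = R+2" using upper K by (auto simp add: succ_quot_def succ_rem_def)
      then show ?thesis by (simp add: succ_gap_def)
    qed
    show ?thesis using n d1 d2' by simp
  qed
qed

lemma succ_gaps_at_index_1:
  assumes K: "1 \<le> K" and Q: "0 \<le> Q" and R: "0 \<le> R" "R < 6*K+5" and M: "coord_mem K Q R"
    and S: "index_mod3 K Q R = 1"
  shows "(succ_gap K Q R = 1 \<and> succ_gap K (succ_quot K Q R) (succ_rem K Q R) = 1) \<or> (succ_gap K Q R = 2 \<and> succ_gap K (succ_quot K Q R) (succ_rem K Q R) = 2)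
     \<or> (succ_gap K Q R mod 3 = 2 \<and> succ_gap K (succ_quot K Q R) (succ_rem K Q R) = 2)"
proof -
  consider "Q = 0" | "1 \<le> Q" "R = 0" | "1 \<le> Q" "Q \<le> 2*K" "0 < R"
    | "2*K+1 \<le> Q" "Q \<le> 4*K" "0 < R" | "4*K+1 \<le> Q" "0 < R" using Q R by linarith
  then show ?thesis
  proof cases
    case 1
    then show ?thesis using S by (simp add: index_mod3_def)
  next
    case 2
    show ?thesis using succ_gaps_at_index_1_multiple[OF K S 2] .
  next
    case 3
    show ?thesis using succ_gaps_at_index_1_lower[OF K M S 3] .
  next
    case 4
    show ?thesis using succ_gaps_at_index_1_middle[OF K R M S 4] .
  next
    case 5
    show ?thesis using succ_gaps_at_index_1_upper[OF K S 5] .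
  qed
qed

section \<open>The permutation property\<close>

primrec coords_of_index :: "int \<Rightarrow> nat \<Rightarrow> int \<times> int" where
  "coords_of_index K 0 = (0,0)"
| "coords_of_index K (Suc n) = (succ_quot K (fst (coords_of_index K n)) (snd (coords_of_index K n)), succ_rem K (fst (coords_of_index K n)) (snd (coords_of_index K n)))"

lemma finite_compl_Gk: assumes k: "1 \<le> k" shows "finite (UNIV - Gk k)"
proof -
  have "UNIV - Gk k \<subseteq> {..<(4*k+1) * aa k + 3}"
  proof
    fix x assume "x \<in> UNIV - Gk k"
    then have "x \<notin> Gk k" by simp
    then have "\<not> ((4*k+1) * aa k + 3 \<le> x)" using ge_threshold_imp_mem_Gk[OF k, of x] by blast
    then show "x \<in> {..<(4*k+1) * aa k + 3}" by simp
  qed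
  then show ?thesis using finite_subset by blast
qed

lemma infinite_Gk: assumes k: "1 \<le> k" shows "infinite (Gk k)"
proof
  assume f: "finite (Gk k)"
  have "UNIV = Gk k \<union> (UNIV - Gk k)" by blast
  then have "finite (UNIV :: nat set)" using f finite_compl_Gk[OF k] by (metis finite_Un)
  then show False by simp
qed

lemma zero_mem_Gk: "0 \<in> Gk k" unfolding Gk_def by (rule gen_zero)

lemma Least_Gk_greater:
  assumes k: "1 \<le> k" and x: "int x = Q * (6*int k+5) + R" and Q: "0 \<le> Q" and R: "0 \<le> R" "R < 6*int k+5"
    and M: "coord_mem (int k) Q R"
  shows "(LEAST y. y \<in> Gk k \<and> x < y) = nat (succ_quot (int k) Q R * (6*int k+5) + succ_rem (int k) Q R)"
proof -
  define K where "K = int k"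
  define Q' where "Q' = succ_quot K Q R"
  define R' where "R' = succ_rem K Q R"
  have K1: "1 \<le> K" using k unfolding K_def by simp
  have MK: "coord_mem K Q R" using M unfolding K_def .
  have RK: "R < 6*K+5" using R unfolding K_def by simp
  have xK: "int x = Q * (6*K+5) + R" using x unfolding K_def .
  have n1: "0 \<le> R' \<and> R' < 6*K+5 \<and> ((Q' = Q \<and> R < R') \<or> (Q' = Q+1 \<and> R' = 0)) \<and> coord_mem K Q' R'"
    using succ_coords[OF K1 Q R(1) RK MK] unfolding Q'_def R'_def by blast
  have Q'0: "0 \<le> Q'" using n1 Q by auto
  have QA: "0 \<le> Q' * (6*K+5)" using Q'0 K1 by simp
  define y0 where "y0 = nat (Q' * (6*K+5) + R')"
  have iy0: "int y0 = Q' * (6*K+5) + R'" unfolding y0_def using QA n1 by simp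
  have y0G: "y0 \<in> Gk k" using mem_Gk_iff_coord_mem[OF k iy0[unfolded K_def] Q'0] n1 unfolding K_def by auto
  have xy0: "int x < int y0"
  proof -
    have "(Q+1)*(6*K+5) = Q*(6*K+5) + (6*K+5)" by (simp add: algebra_simps)
    then show ?thesis using n1 iy0 xK RK by auto
  qed
  have least: "y0 \<le> y" if yG: "y \<in> Gk k" and xy: "x < y" for y
  proof (rule ccontr)
    assume "\<not> y0 \<le> y"
    then have yy0: "int y < int y0" by simp
    define Ry where "Ry = int y - Q*(6*K+5)"
    have yK: "int y = Q*(6*K+5) + Ry" unfolding Ry_def by simp
    have RRy: "R < Ry" using xy xK yK by simp
    have e: "(Q+1)*(6*K+5) = Q*(6*K+5) + (6*K+5)" by (simp add: algebra_simps)
    have RyA: "Ry < 6*K+5" and RyR': "Q' = Q \<Longrightarrow> Ry < R'" using n1 iy0 yK yy0 e by auto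
    have "coord_mem K Q Ry" using mem_Gk_iff_coord_mem[OF k yK[unfolded K_def] Q] yG RRy R RyA unfolding K_def by auto
    moreover have "\<not> coord_mem K Q Ry" using no_coord_mem_before_succ[OF K1 Q R(1) RK MK Q'_def R'_def RRy RyA RyR'] .
    ultimately show False by blast
  qed
  have "(LEAST y. y \<in> Gk k \<and> x < y) = y0"
    by (rule Least_equality) (use y0G xy0 least in auto)
  then show ?thesis unfolding y0_def Q'_def R'_def K_def .
qed

lemma Suc_mod3: "int (Suc n mod 3) = (if int (n mod 3) = 2 then 0 else int (n mod 3) + 1)"
proof -
  have "n mod 3 = 0 \<or> n mod 3 = 1 \<or> n mod 3 = 2" by arith
  then show ?thesis by (auto simp: mod_Suc)
qed

lemma coords_of_index_enumerate:
  assumes k: "1 \<le> k"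
  shows "0 \<le> fst (coords_of_index (int k) n) \<and> 0 \<le> snd (coords_of_index (int k) n) \<and> snd (coords_of_index (int k) n) < 6*int k+5
    \<and> coord_mem (int k) (fst (coords_of_index (int k) n)) (snd (coords_of_index (int k) n))
    \<and> index_mod3 (int k) (fst (coords_of_index (int k) n)) (snd (coords_of_index (int k) n)) = int (n mod 3)
    \<and> int (enumerate (Gk k) n) = fst (coords_of_index (int k) n) * (6*int k+5) + snd (coords_of_index (int k) n)"
proof (induction n)
  case 0
  have "enumerate (Gk k) 0 = 0" unfolding enumerate_0 by (rule Least_equality) (use zero_mem_Gk in auto)
  then show ?case by (simp add: coord_mem_def index_mod3_def)
next
  case (Suc n)
  define Q where "Q = fst (coords_of_index (int k) n)"
  define R where "R = snd (coords_of_index (int k) n)"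
  have IH: "0 \<le> Q" "0 \<le> R" "R < 6*int k+5" "coord_mem (int k) Q R" "index_mod3 (int k) Q R = int (n mod 3)"
     "int (enumerate (Gk k) n) = Q * (6*int k+5) + R" using Suc.IH unfolding Q_def R_def by auto
  have K1: "1 \<le> int k" using k by simp
  have RK: "R < 6*int k + 5" using IH by simp
  have n1: "0 \<le> succ_rem (int k) Q R \<and> succ_rem (int k) Q R < 6*int k+5 \<and> ((succ_quot (int k) Q R = Q \<and> R < succ_rem (int k) Q R) \<or> (succ_quot (int k) Q R = Q+1 \<and> succ_rem (int k) Q R = 0)) \<and> coord_mem (int k) (succ_quot (int k) Q R) (succ_rem (int k) Q R)"
    using succ_coords[OF K1 IH(1) IH(2) RK IH(4) refl refl] .
  have s: "index_mod3 (int k) (succ_quot (int k) Q R) (succ_rem (int k) Q R) = int (Suc n mod 3)"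
    using index_mod3_succ[OF K1 IH(1) IH(2) RK IH(4)] IH(5) Suc_mod3[of n] by simp
  have en: "enumerate (Gk k) (Suc n) = (LEAST s. s \<in> Gk k \<and> enumerate (Gk k) n < s)"
    by (rule enumerate_Suc''[OF infinite_Gk[OF k]])
  have "enumerate (Gk k) (Suc n) = nat (succ_quot (int k) Q R * (6*int k+5) + succ_rem (int k) Q R)"
    unfolding en using Least_Gk_greater[OF k IH(6) IH(1) IH(2) RK IH(4)] .
  moreover have "0 \<le> succ_quot (int k) Q R * (6*int k+5) + succ_rem (int k) Q R" using n1 IH(1) by auto
  ultimately have "int (enumerate (Gk k) (Suc n)) = succ_quot (int k) Q R * (6*int k+5) + succ_rem (int k) Q R" by simp
  then show ?case using n1 s IH(1) by (auto simp: Q_def R_def)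
qed

lemma succ_coords_gap: "1 \<le> K \<Longrightarrow> 0 \<le> Q \<Longrightarrow> 0 \<le> R \<Longrightarrow> R < 6*K+5 \<Longrightarrow> coord_mem K Q R \<Longrightarrow>
  succ_quot K Q R * (6*K+5) + succ_rem K Q R = Q*(6*K+5) + R + succ_gap K Q R"
proof -
  assume a: "1 \<le> K" "0 \<le> Q" "0 \<le> R" "R < 6*K+5" "coord_mem K Q R"
  have n1: "((succ_quot K Q R = Q \<and> R < succ_rem K Q R) \<or> (succ_quot K Q R = Q+1 \<and> succ_rem K Q R = 0))"
    using succ_coords[OF a refl refl] by blast
  have e: "(Q+1)*(6*K+5) = Q*(6*K+5) + (6*K+5)" by (simp add: algebra_simps)
  show ?thesis using n1 e by (auto simp: succ_gap_def)
qed

lemma mod3_distinct_of_gaps: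
  fixes X d1 d2 :: int
  assumes "d1 mod 3 = d2 mod 3" "d2 mod 3 \<noteq> 0"
  shows "X mod 3 \<noteq> (X + d1) mod 3 \<and> X mod 3 \<noteq> (X + d1 + d2) mod 3 \<and> (X + d1) mod 3 \<noteq> (X + d1 + d2) mod 3"
proof -
  define x u where "x = X mod 3" and "u = d2 mod 3"
  have "(X + d1) mod 3 = (x + u) mod 3" unfolding x_def u_def assms(1)[symmetric] by (rule mod_add_eq[symmetric])
  moreover have "(X + d1 + d2) mod 3 = ((X + d1) mod 3 + u) mod 3"
    unfolding u_def by (rule mod_add_eq[symmetric])
  moreover have "x = 0 \<or> x = 1 \<or> x = 2" "u = 1 \<or> u = 2" using assms(2) unfolding x_def u_def by presburger+
  ultimately show ?thesis unfolding x_def[symmetric] by auto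
qed
lemma enumerate_Gk_block_mod3_distinct:
  assumes k: "1 \<le> k"
  shows "enumerate (Gk k) (m*3+1) mod 3 \<noteq> enumerate (Gk k) (m*3+2) mod 3
       \<and> enumerate (Gk k) (m*3+1) mod 3 \<noteq> enumerate (Gk k) (m*3+3) mod 3
       \<and> enumerate (Gk k) (m*3+2) mod 3 \<noteq> enumerate (Gk k) (m*3+3) mod 3"
proof -
  define K where "K = int k"
  have K1: "1 \<le> K" using k unfolding K_def by simp
  define Q where "Q = fst (coords_of_index K (m*3+1))"
  define R where "R = snd (coords_of_index K (m*3+1))"
  define Q1 where "Q1 = succ_quot K Q R"
  define R1 where "R1 = succ_rem K Q R"
  define Q2 where "Q2 = succ_quot K Q1 R1"
  define R2 where "R2 = succ_rem K Q1 R1"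
  have s2: "m*3+2 = Suc (m*3+1)" by simp
  have s3: "m*3+3 = Suc (m*3+2)" by simp
  have p2: "coords_of_index K (m*3+2) = (Q1, R1)" unfolding Q1_def R1_def Q_def R_def by (simp only: s2 coords_of_index.simps(2))
  have p3: "coords_of_index K (m*3+3) = (Q2, R2)"
  proof -
    have "coords_of_index K (m*3+3) = (succ_quot K (fst (coords_of_index K (m*3+2))) (snd (coords_of_index K (m*3+2))), succ_rem K (fst (coords_of_index K (m*3+2))) (snd (coords_of_index K (m*3+2))))"
      by (simp only: s3 coords_of_index.simps(2))
    then show ?thesis unfolding p2 Q2_def R2_def by simp
  qed
  have I0: "0 \<le> Q" "0 \<le> R" "R < 6*K+5" "coord_mem K Q R" "index_mod3 K Q R = int ((m*3+1) mod 3)"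
     "int (enumerate (Gk k) (m*3+1)) = Q * (6*K+5) + R" using coords_of_index_enumerate[OF k, of "m*3+1"] unfolding Q_def R_def K_def by auto
  have I1: "0 \<le> Q1" "0 \<le> R1" "R1 < 6*K+5" "coord_mem K Q1 R1"
     "int (enumerate (Gk k) (m*3+2)) = Q1 * (6*K+5) + R1" using coords_of_index_enumerate[OF k, of "m*3+2"] p2 unfolding K_def by auto
  have I2: "int (enumerate (Gk k) (m*3+3)) = Q2 * (6*K+5) + R2" using coords_of_index_enumerate[OF k, of "m*3+3"] p3 unfolding K_def by auto
  have m1: "(m*3+1) mod 3 = 1" by presburger
  have s1: "index_mod3 K Q R = 1" using I0(5) unfolding m1 by simp
  have d: "(succ_gap K Q R = 1 \<and> succ_gap K Q1 R1 = 1) \<or> (succ_gap K Q R = 2 \<and> succ_gap K Q1 R1 = 2) \<or> (succ_gap K Q R mod 3 = 2 \<and> succ_gap K Q1 R1 = 2)"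
    using succ_gaps_at_index_1[OF K1 I0(1) I0(2) I0(3) I0(4) s1] unfolding Q1_def R1_def by simp
  have x1: "Q1 * (6*K+5) + R1 = Q*(6*K+5) + R + succ_gap K Q R" using succ_coords_gap[OF K1 I0(1-4)] unfolding Q1_def R1_def .
  have x2: "Q2 * (6*K+5) + R2 = Q1*(6*K+5) + R1 + succ_gap K Q1 R1" using succ_coords_gap[OF K1 I1(1-4)] unfolding Q2_def R2_def .
  define X where "X = Q*(6*K+5) + R"
  have "succ_gap K Q R mod 3 = succ_gap K Q1 R1 mod 3" "succ_gap K Q1 R1 mod 3 \<noteq> 0" using d by auto
  then have r: "X mod 3 \<noteq> (X + succ_gap K Q R) mod 3 \<and> X mod 3 \<noteq> (X + succ_gap K Q R + succ_gap K Q1 R1) mod 3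
      \<and> (X + succ_gap K Q R) mod 3 \<noteq> (X + succ_gap K Q R + succ_gap K Q1 R1) mod 3"
    by (rule mod3_distinct_of_gaps)
  have e1: "int (enumerate (Gk k) (m*3+1) mod 3) = X mod 3" using I0(6) unfolding X_def by (simp add: zmod_int)
  have e2: "int (enumerate (Gk k) (m*3+2) mod 3) = (X + succ_gap K Q R) mod 3" using I1(5) x1 unfolding X_def by (simp add: zmod_int)
  have e3: "int (enumerate (Gk k) (m*3+3) mod 3) = (X + succ_gap K Q R + succ_gap K Q1 R1) mod 3" using I2 x2 x1 unfolding X_def by (simp add: zmod_int)
  show ?thesis using r e1 e2 e3 by (metis of_nat_eq_iff)
qed

lemma bij_betw_three_distinct: "(a::nat) < 3 \<Longrightarrow> b < 3 \<Longrightarrow> c < 3 \<Longrightarrow> a \<noteq> b \<Longrightarrow> a \<noteq> c \<Longrightarrow> b \<noteq> c \<Longrightarrow>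
  (f::nat\<Rightarrow>nat) 1 = a \<Longrightarrow> f 2 = b \<Longrightarrow> f 3 = c \<Longrightarrow> bij_betw f {1..3} {0..<3}"
proof -
  assume h: "a < 3" "b < 3" "c < 3" "a \<noteq> b" "a \<noteq> c" "b \<noteq> c" "f 1 = a" "f 2 = b" "f 3 = c"
  have s: "{1..3::nat} = {1,2,3}" by auto
  have inj: "inj_on f {1,2,3}" using h(4-9) by simp
  have im: "f ` {1,2,3} = {a,b,c}" using h(7-9) by simp
  have sub: "{a,b,c} \<subseteq> {0..<3}" using h(1-3) by auto
  have c3: "card {a,b,c} = card {0..<(3::nat)}" using h(4-6) by simp
  have e: "{a,b,c} = {0..<3}" by (rule card_subset_eq[OF _ sub c3]) simp
  show ?thesis unfolding s bij_betw_def using inj im e by simp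
qed

lemma perm_numerical_semigroup_Gk: assumes k: "1 \<le> k" shows "perm_numerical_semigroup 3 (Gk k)"
proof -
  define K where "K = int k"
  have K1: "1 \<le> K" using k unfolding K_def by simp
  have cl: "\<forall>x\<in>Gk k. \<forall>y\<in>Gk k. x + y \<in> Gk k" unfolding Gk_def by (intro ballI) (rule gen_add)
  have ns: "numerical_semigroup (Gk k)"
    unfolding numerical_semigroup_def using zero_mem_Gk cl finite_compl_Gk[OF k] by blast
  have p1: "coords_of_index K (Suc 0) = (1,0)" by (simp add: succ_quot_def succ_rem_def)
  have p2: "coords_of_index K (Suc (Suc 0)) = (1, 6*K-1)" using p1 K1 by (simp add: succ_quot_def succ_rem_def)
  have p3: "coords_of_index K (Suc (Suc (Suc 0))) = (1, 6*K+1)" using p2 K1 by (simp add: succ_quot_def succ_rem_def)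
  have "int (enumerate (Gk k) (Suc 0)) = 6*K+5" using coords_of_index_enumerate[OF k, of "Suc 0"] p1 unfolding K_def by simp
  then have "int (enumerate (Gk k) (Suc 0)) = int (aa k)" unfolding K_def by (simp add: int_aa)
  then have e1: "enumerate (Gk k) 1 = aa k" by (simp only: of_nat_eq_iff One_nat_def)
  have "int (enumerate (Gk k) (Suc (Suc 0))) = 12*K+4" using coords_of_index_enumerate[OF k, of "Suc (Suc 0)"] p2 unfolding K_def by simp
  moreover have "int (2 * aa k - 6) = 12*K+4" unfolding K_def by (simp add: aa_def)
  ultimately have e2: "enumerate (Gk k) 2 = 2 * aa k - 6" by (simp add: numeral_2_eq_2)
  have "int (enumerate (Gk k) (Suc (Suc (Suc 0)))) = 12*K+6" using coords_of_index_enumerate[OF k, of "Suc (Suc (Suc 0))"] p3 unfolding K_def by simp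
  moreover have "int (2 * aa k - 4) = 12*K+6" unfolding K_def by (simp add: aa_def)
  ultimately have e3: "enumerate (Gk k) 3 = 2 * aa k - 4" by (simp add: numeral_3_eq_3)
  have s: "{1..3::nat} = {1,2,3}" by auto
  have gen: "Gk k = gen (enumerate (Gk k) ` {1..3})" unfolding s using e1 e2 e3 by (simp add: Gk_def)
  have bij: "\<forall>m. bij_betw (\<lambda>j. enumerate (Gk k) (m * 3 + j) mod 3) {1..3} {0..<3}"
  proof
    fix m
    show "bij_betw (\<lambda>j. enumerate (Gk k) (m * 3 + j) mod 3) {1..3} {0..<3}"
      using enumerate_Gk_block_mod3_distinct[OF k, of m]
      by (intro bij_betw_three_distinct[of "enumerate (Gk k) (m*3+1) mod 3" "enumerate (Gk k) (m*3+2) mod 3" "enumerate (Gk k) (m*3+3) mod 3"]) auto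
  qed
  show ?thesis unfolding perm_numerical_semigroup_def using ns gen bij by blast
qed

theorem lemma4p14:
  fixes k :: nat
  assumes "k \<ge> 1"
  shows "(\<forall>x. x \<in> Gk k \<longleftrightarrow>
            (\<exists>q r s :: nat. r \<le> q \<and>
               int x = int ((s + 2 * q) * aa k) - 6 * int q + 2 * int r))
       \<and> (\<forall>i\<in>{0..4*k}. set_less (Iik i k) (Iik (i + 2) k))
       \<and> (\<forall>i\<in>{0..2*k}. set_less (Iik i k) (Iik (i + 1) k))
       \<and> (\<forall>i\<in>{2*k+1..4*k+1}.
            Iik (i + 1) k \<inter> ivl (int ((i - 1) * aa k) + 1) (int (i * aa k))
              = ivl2 (int (i * aa k) - 6 * ((int i - 1 - 2 * int k) div 2) - 1)
                     (int (i * aa k) - 1))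
       \<and> Gk k = H14 k
       \<and> perm_numerical_semigroup 3 (H14 k)"
proof (intro conjI ballI allI)
  show "x \<in> Gk k \<longleftrightarrow> (\<exists>q r s :: nat. r \<le> q \<and> int x = int ((s + 2 * q) * aa k) - 6 * int q + 2 * int r)"
    for x by (rule mem_Gk_iff)
  show "set_less (Iik i k) (Iik (i + 2) k)" if "i \<in> {0..4*k}" for i
    using that by (intro set_less_Iik_add2) simp
  show "set_less (Iik i k) (Iik (i + 1) k)" if "i \<in> {0..2*k}" for i
    using that by (intro set_less_Iik_Suc) simp
  show "Iik (i + 1) k \<inter> ivl (int ((i - 1) * aa k) + 1) (int (i * aa k))
          = ivl2 (int (i * aa k) - 6 * ((int i - 1 - 2 * int k) div 2) - 1) (int (i * aa k) - 1)"
    if "i \<in> {2*k+1..4*k+1}" for i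
    using that by (intro Iik_Suc_inter_window) simp_all
  show "Gk k = H14 k" using Gk_eq_H14 assms by simp
  show "perm_numerical_semigroup 3 (H14 k)" using perm_numerical_semigroup_Gk Gk_eq_H14 assms by simp
qed

end
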